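(* Let $1\le q_1<q_2<\cdots$ be a strictly increasing sequence of integers satisfying $q_{n+1}<2q_n$ for all $n\in\mathbb{N}$, and let $S_n=q_1+\dots+q_n$. Let $k_0\ge 0$ be an integer. Then $S_n-q_{n+1}\ge 2k_0$ for every integer $n\ge q_1+2k_0+1$. *)

theory Defs
  imports Main
begin

end

theory Submission
  imports Defs
begin

text \<open>For integers, \<open>q (n+1) < 2 q n\<close> means \<open>q (n+1) \<le> 2 q n - 1\<close>, so passing from
  \<open>n\<close> to \<open>n+1\<close> raises \<open>S n - q (n+1)\<close> by at least one. Starting from
  \<open>S 1 - q 2 \<ge> 1 - q 1\<close> this gives \<open>S n - q (n+1) \<ge> n - q 1\<close>, which is at least
  \<open>2 k0 + 1\<close> once \<open>n \<ge> q 1 + 2 k0 + 1\<close>.\<close>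

lemma sum_minus_next_ge_index_minus_first:
  fixes q :: "nat \<Rightarrow> int"
  assumes ratio: "\<And>m. m \<ge> 1 \<Longrightarrow> q (Suc m) < 2 * q m"
    and "n \<ge> 1"
  shows "int n - q 1 \<le> (\<Sum>i=1..n. q i) - q (Suc n)"
  using \<open>n \<ge> 1\<close>
proof (induction n rule: nat_induct_at_least)
  case base
  show ?case using ratio[of 1] by simp
next
  case (Suc n)
  have "q (Suc (Suc n)) < 2 * q (Suc n)" using ratio[of "Suc n"] by simp
  then show ?case using Suc.IH by simp
qed

theorem lemma2p2:
  fixes q :: "nat \<Rightarrow> int" and k0 :: int and n :: nat
  assumes q1: "1 \<le> q 1"
    and incr: "\<And>m. m \<ge> 1 \<Longrightarrow> q m < q (Suc m)"
    and ratio: "\<And>m. m \<ge> 1 \<Longrightarrow> q (Suc m) < 2 * q m"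
    and k0: "0 \<le> k0"
    and n: "int n \<ge> q 1 + 2 * k0 + 1"
  shows "(\<Sum>i=1..n. q i) - q (Suc n) \<ge> 2 * k0"
proof -
  have "n \<ge> 1" using q1 k0 n by linarith
  then have "int n - q 1 \<le> (\<Sum>i=1..n. q i) - q (Suc n)"
    using sum_minus_next_ge_index_minus_first[of q, OF ratio] by blast
  then show ?thesis using n by linarith
qed

end
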